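(* With $\alpha=(1+\sqrt5)/2$, $\beta=(1-\sqrt5)/2$, the following hold: $$\operatorname{Li}_2\Big(\frac\alpha2\Big)+\operatorname{Li}_2\Big(\frac\beta2\Big)=\frac{\pi^2}{12}+2\ln^2\alpha-\ln^2 2,$$ $$\operatorname{Li}_2\Big(\frac{\alpha^3}5\Big)+\operatorname{Li}_2\Big(\frac{\beta^3}5\Big)=\frac{\pi^2}{12}+6\ln^2\alpha-2\ln^22+2\ln2\ln5-\ln^25-\operatorname{Li}_2\Big(-\frac14\Big);$$ for every even integer $r\ge0$, $$\operatorname{Li}_2\Big(\frac{\alpha^r}{L_r}\Big)+\operatorname{Li}_2\Big(\frac{\beta^r}{L_r}\Big)=\frac{\pi^2}{6}+r^2\ln^2\alpha-\ln^2(L_r),$$ in particular $\operatorname{Li}_2(\alpha^2/3)+\operatorname{Li}_2(\beta^2/3)=\frac{\pi^2}6+4\ln^2\alpha-\ln^23$; for every odd integer $r\ge1$, $$\operatorname{Li}_2\Big(\frac{\alpha^r}{\sqrt5F_r}\Big)+\operatorname{Li}_2\Big(\frac{-\beta^r}{\sqrt5F_r}\Big)=\frac{\pi^2}{6}+r^2\ln^2\alpha-\frac14\ln^25-\ln5\ln(F_r)-\ln^2(F_r),$$ in particular $\operatorname{Li}_2(\alpha/\sqrt5)+\operatorname{Li}_2(-\beta/\sqrt5)=\frac{\pi^2}6+\ln^2\alpha-\frac14\ln^25$; and $$\operatorname{Li}_2\Big(\frac{\alpha^2}4\Big)+\operatorname{Li}_2\Big(\frac{\beta^2}4\Big)=\frac{\pi^2}{6}+2\ln^2\alpha-\frac12\ln^25+2\ln2\ln5-4\ln^22-\operatorname{Li}_2\Big(\frac15\Big),$$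 $$\operatorname{Li}_2\Big(\frac\alpha3\Big)+\operatorname{Li}_2\Big(\frac\beta3\Big)=\ln^2\alpha-\frac14\ln^25+\ln3\ln5-\ln^23+\frac32\operatorname{Li}_2\Big(\frac15\Big)-\frac12\operatorname{Li}_2\Big(\frac1{25}\Big).$$
   Context: $\operatorname{Li}_2(x)=\sum_{k\ge1}x^k/k^2$ is the dilogarithm (for real $x\le1$). $F_n=(\alpha^n-\beta^n)/(\alpha-\beta)$ and $L_n=\alpha^n+\beta^n$ are the Fibonacci and Lucas numbers. *)

theory Defs
  imports "HOL-Analysis.Analysis"
begin

text \<open>Dilogarithm Li_2(x) = sum_{k>=1} x^k / k^2 (intended for real x with |x| <= 1).\<close>
definition Li2 :: "real \<Rightarrow> real" where
  "Li2 x = (\<Sum>k. x ^ Suc k / (real (Suc k))\<^sup>2)"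

definition gold_alpha :: real where "gold_alpha = (1 + sqrt 5) / 2"
definition gold_beta :: real where "gold_beta = (1 - sqrt 5) / 2"

definition fibR :: "nat \<Rightarrow> real" where
  "fibR n = (gold_alpha ^ n - gold_beta ^ n) / (gold_alpha - gold_beta)"
definition lucasR :: "nat \<Rightarrow> real" where
  "lucasR n = gold_alpha ^ n + gold_beta ^ n"

end

theory Submission
  imports Defs "HOL-Real_Asymp.Real_Asymp"
begin

text \<open>
  Every identity is an instance of classical functional equations of the dilogarithm: Euler's
  reflection for \<open>Li2 x + Li2 (1 - x)\<close>, the duplication formula, Landen's identity for
  \<open>Li2 z + Li2 (z / (z - 1))\<close>, Landen's reflection for Legendre's chi function and the
  five-term relation. Because \<open>\<alpha> + \<beta> = 1\<close> and \<open>\<alpha> \<beta> = -1\<close>, these equations map the golden points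
  \<open>\<alpha>/2, \<beta>/2, \<beta>\<^sup>2/2, -\<beta>\<^sup>3, 1/\<surd>5, \<dots>\<close> into one another and their logarithms into
  \<open>\<plusminus> k ln \<alpha>\<close> plus logarithms of rationals, so finitely many instances can be solved for the
  requested sums. The Lucas and Fibonacci families are the reflection formula at
  \<open>\<alpha>\<^sup>r / (\<alpha>\<^sup>r + \<bar>\<beta>\<bar>\<^sup>r)\<close>, using \<open>\<bar>\<beta>\<bar> = 1/\<alpha>\<close>.

  The functional equations are proved by differentiation: \<open>Li2' x = - ln (1 - x) / x\<close> on
  \<open>(-1, 1)\<close>, so the difference of the two sides has derivative zero on an interval, and the
  constant is read off at a point of the interval or as a one-sided limit at an endpoint.
\<close>

lemma DERIV_zero_unique_convex:
  fixes f :: "real \<Rightarrow> real"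
  assumes "convex S" "\<And>x. x \<in> S \<Longrightarrow> (f has_real_derivative 0) (at x)" "x \<in> S" "y \<in> S"
  shows "f x = f y"
  using has_field_derivative_zero_constant[of S f] assms by (metis has_field_derivative_at_within)

lemma DERIV_zero_eq_limit_at_right:
  fixes f :: "real \<Rightarrow> real"
  assumes "\<And>x. x \<in> {a<..<b} \<Longrightarrow> (f has_real_derivative 0) (at x)" "(f \<longlongrightarrow> L) (at_right a)"
    and "x \<in> {a<..<b}"
  shows "f x = L"
proof -
  have "a < b" using assms(3) by simp
  have "f y = f x" if "y \<in> {a<..<b}" for y
    by (rule DERIV_zero_unique_convex[of "{a<..<b}" f y x]) (use assms(1,3) that in auto)
  then have "eventually (\<lambda>y. f y = f x) (at_right a)"
    unfolding eventually_at_right_field using \<open>a < b\<close> by auto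
  then have "(f \<longlongrightarrow> f x) (at_right a)" by (rule tendsto_eventually)
  with assms(2) show ?thesis using \<open>a < b\<close> by (metis tendsto_unique trivial_limit_at_right_real)
qed

lemma norm_Li2_term_le:
  "\<bar>x\<bar> \<le> 1 \<Longrightarrow> norm (x ^ Suc k / (real (Suc k))\<^sup>2) \<le> 1 / (real (Suc k))\<^sup>2"
  by (simp add: power_abs power_le_one divide_right_mono del: power_Suc of_nat_Suc)

lemma summable_inverse_squares: "summable (\<lambda>k. 1 / (real (Suc k))\<^sup>2)"
  using inverse_squares_sums sums_summable by (simp add: add.commute)

lemma summable_Li2: "\<bar>x\<bar> \<le> 1 \<Longrightarrow> summable (\<lambda>k. x ^ Suc k / (real (Suc k))\<^sup>2)"
  by (rule summable_comparison_test'[OF summable_inverse_squares norm_Li2_term_le])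

lemma Li2_0 [simp]: "Li2 0 = 0"
  by (simp add: Li2_def)

lemma Li2_1: "Li2 1 = pi\<^sup>2 / 6"
  using inverse_squares_sums by (simp add: Li2_def sums_iff add.commute)

lemma continuous_on_Li2: "continuous_on {-1..1} Li2"
proof -
  have "uniform_limit {-1..1} (\<lambda>n x. \<Sum>k<n. x ^ Suc k / (real (Suc k))\<^sup>2) Li2 sequentially"
    unfolding Li2_def[abs_def]
    by (rule Weierstrass_m_test[OF _ summable_inverse_squares], rule norm_Li2_term_le) auto
  then show ?thesis
    by (rule uniform_limit_theorem[rotated]) (simp, intro always_eventually allI continuous_intros, simp)
qed

lemma tendsto_Li2:
  assumes "(f \<longlongrightarrow> a) F" "a \<in> {-1..1}" "eventually (\<lambda>x. f x \<in> {-1..1}) F"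
  shows "((\<lambda>x. Li2 (f x)) \<longlongrightarrow> Li2 a) F"
  by (rule continuous_on_tendsto_compose[OF continuous_on_Li2 assms])

definition Li2_deriv :: "real \<Rightarrow> real" where
  "Li2_deriv x = (if x = 0 then 1 else - ln (1 - x) / x)"

lemma Li2_deriv_eq: "x \<noteq> 0 \<Longrightarrow> Li2_deriv x = - ln (1 - x) / x"
  by (simp add: Li2_deriv_def)

lemma Li2_deriv_sums:
  assumes "\<bar>x\<bar> < 1"
  shows "(\<lambda>n. x ^ n / real (Suc n)) sums Li2_deriv x"
proof (cases "x = 0")
  case True
  then show ?thesis using powser_sums_zero[of "\<lambda>n. 1 / real (Suc n)"] by (simp add: Li2_deriv_def)
next
  case False
  have "(\<lambda>n. - (x ^ n) / real n) sums ln (1 - x)"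
    using ln_series'[of "- x"] assms by simp
  then have "(\<lambda>n. x ^ Suc n / real (Suc n)) sums - ln (1 - x)"
    using sums_minus sums_Suc_iff by fastforce
  then have "(\<lambda>n. x ^ Suc n / real (Suc n) / x) sums (- ln (1 - x) / x)"
    by (rule sums_divide)
  then show ?thesis using False by (simp add: Li2_deriv_def)
qed

lemma DERIV_Li2:
  assumes "\<bar>x\<bar> < 1"
  shows "(Li2 has_real_derivative Li2_deriv x) (at x)"
proof -
  define c :: "nat \<Rightarrow> real" where "c n = (if n = 0 then 0 else 1 / (real n)\<^sup>2)" for n
  have "(\<lambda>k. z ^ Suc k / (real (Suc k))\<^sup>2) sums s \<longleftrightarrow> (\<lambda>n. c n * z ^ n) sums s"
    for z s :: real
    using sums_Suc_iff[of "\<lambda>n. c n * z ^ n"] by (simp add: c_def)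
  then have Li2_powser: "Li2 = (\<lambda>x. \<Sum>n. c n * x ^ n)"
    by (simp add: Li2_def suminf_def fun_eq_iff)
  have "summable (\<lambda>n. c n * z ^ n)" if "norm z < 1" for z :: real
    using summable_Li2[of z] that summable_Suc_iff[of "\<lambda>n. c n * z ^ n"] by (simp add: c_def)
  then have "((\<lambda>x. \<Sum>n. c n * x ^ n) has_real_derivative (\<Sum>n. diffs c n * x ^ n)) (at x)"
    using assms by (intro termdiffs_strong'[of 1]) auto
  moreover have "(\<lambda>n. diffs c n * x ^ n) = (\<lambda>n. x ^ n / real (Suc n))"
    by (auto simp: diffs_def c_def power2_eq_square simp del: of_nat_Suc)
  ultimately show ?thesis
    using Li2_deriv_sums[OF assms] by (simp add: Li2_powser sums_iff)
qed

lemma DERIV_Li2_chain [derivative_intros]: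
  assumes "(f has_real_derivative f') (at x within s)" "\<bar>f x\<bar> < 1"
  shows "((\<lambda>x. Li2 (f x)) has_real_derivative Li2_deriv (f x) * f') (at x within s)"
  using DERIV_chain2[OF DERIV_Li2[OF assms(2)] assms(1)] .

lemma Li2_reflection:
  assumes "0 < x" "x < 1"
  shows "Li2 x + Li2 (1 - x) = pi\<^sup>2 / 6 - ln x * ln (1 - x)"
proof -
  define F where "F x = Li2 x + Li2 (1 - x) + ln x * ln (1 - x)" for x
  have "(F has_real_derivative 0) (at x)" if "x \<in> {0<..<1}" for x
    unfolding F_def using that
    by (auto intro!: derivative_eq_intros simp: Li2_deriv_def diff_divide_distrib)
  moreover have "(F \<longlongrightarrow> Li2 0 + Li2 1 + 0) (at_right 0)"
    unfolding F_def
    by (intro tendsto_add tendsto_Li2) (real_asymp | auto simp: eventually_at_right_field intro: exI[of _ 1])+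
  ultimately have "F x = Li2 1"
    using assms by (intro DERIV_zero_eq_limit_at_right[of 0 1]) auto
  then show ?thesis by (simp add: F_def Li2_1)
qed

lemma Li2_duplication:
  assumes "\<bar>x\<bar> \<le> 1"
  shows "Li2 x + Li2 (- x) = Li2 (x\<^sup>2) / 2"
proof -
  define F where "F x = Li2 x + Li2 (- x) - Li2 (x\<^sup>2) / 2" for x
  have deriv: "(F has_real_derivative 0) (at y)" if "y \<in> {-1<..<1}" for y
  proof -
    have "1 - y\<^sup>2 = (1 - y) * (1 + y)"
      by (simp add: power2_eq_square algebra_simps)
    then have "ln (1 - y\<^sup>2) = ln (1 - y) + ln (1 + y)"
      using that by (simp add: ln_mult)
    moreover have "\<bar>y\<^sup>2\<bar> < 1"
      using that by (simp add: abs_square_less_1 abs_less_iff)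
    ultimately show ?thesis
      unfolding F_def using that
      by (auto intro!: derivative_eq_intros simp: Li2_deriv_def) (simp add: field_simps power2_eq_square)
  qed
  have "F y = F 0" if "y \<in> {-1<..<1}" for y
    using deriv that by (intro DERIV_zero_unique_convex[of "{-1<..<1}" F y 0]) auto
  moreover have "continuous_on (closure {-1<..<1}) F"
    unfolding F_def
    by (simp, intro continuous_intros continuous_on_compose2[OF continuous_on_Li2])
       (auto simp: abs_square_le_1 abs_le_iff, smt (verit) zero_le_power2)
  moreover have "x \<in> closure {-1<..<1}"
    using assms by (simp add: abs_le_iff)
  ultimately have "F x = F 0"
    by (intro continuous_constant_on_closure[of "{-1<..<1}" F "F 0" x])
  then show ?thesis by (simp add: F_def)
qed

lemma Li2_minus_1: "Li2 (- 1) = - pi\<^sup>2 / 12"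
  using Li2_duplication[of 1] by (simp add: Li2_1)

lemma Li2_Landen:
  assumes "-1 < z" "z < 1/2"
  shows "Li2 z + Li2 (z / (z - 1)) = - (ln (1 - z))\<^sup>2 / 2"
proof -
  define F where "F z = Li2 z + Li2 (z / (z - 1)) + (ln (1 - z))\<^sup>2 / 2" for z
  have "(F has_real_derivative 0) (at y)" if y: "y \<in> {-1<..<1/2}" for y
  proof -
    have "\<bar>y / (y - 1)\<bar> < 1"
      using y by (auto simp: abs_less_iff field_simps)
    moreover have "ln (1 - y / (y - 1)) = - ln (1 - y)"
    proof -
      have "1 - y / (y - 1) = inverse (1 - y)" using y by (simp add: field_simps)
      then show ?thesis using y by (simp add: ln_inverse)
    qed
    ultimately show ?thesis
      unfolding F_def using y
      by (auto intro!: derivative_eq_intros simp: Li2_deriv_def) (simp_all add: field_simps)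
  qed
  then have "F z = F 0"
    using assms by (intro DERIV_zero_unique_convex[of "{-1<..<1/2}"]) auto
  then show ?thesis by (simp add: F_def)
qed

lemma Li2_chi_reflection:
  assumes "0 < x" "x < 1"
  shows "Li2 x - Li2 (- x) + Li2 ((1 - x) / (1 + x)) - Li2 (- ((1 - x) / (1 + x)))
         = pi\<^sup>2 / 4 + ln x * ln ((1 + x) / (1 - x))"
proof -
  define F where "F x = Li2 x - Li2 (- x) + Li2 ((1 - x) / (1 + x)) - Li2 (- ((1 - x) / (1 + x)))
         - ln x * (ln (1 + x) - ln (1 - x))" for x
  have "(F has_real_derivative 0) (at y)" if y: "y \<in> {0<..<1}" for y
  proof -
    have "1 + (1 - y) / (1 + y) = 2 / (1 + y)" "1 - (1 - y) / (1 + y) = 2 * y / (1 + y)"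
      using y by (simp_all add: field_simps)
    then have "ln (1 + (1 - y) / (1 + y)) = ln 2 - ln (1 + y)"
      "ln (1 - (1 - y) / (1 + y)) = ln 2 + ln y - ln (1 + y)"
      using y by (simp_all add: ln_div ln_mult)
    moreover have "0 < (1 - y) / (1 + y)" "(1 - y) / (1 + y) < 1"
      using y by (auto simp: field_simps)
    ultimately show ?thesis
      unfolding F_def using y
      by (auto intro!: derivative_eq_intros simp: Li2_deriv_def)
         (simp add: divide_simps; simp add: algebra_simps)
  qed
  moreover have "(F \<longlongrightarrow> Li2 0 - Li2 (- 0) + Li2 1 - Li2 (- 1) - 0) (at_right 0)"
    unfolding F_def
    by (intro tendsto_diff tendsto_add tendsto_Li2)
       (real_asymp | auto simp: eventually_at_right_field field_simps intro: exI[of _ 1])+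
  ultimately have "F x = pi\<^sup>2 / 4"
    using assms by (subst DERIV_zero_eq_limit_at_right[of 0 1]) (auto simp: Li2_1 Li2_minus_1)
  then show ?thesis
    using assms by (simp add: F_def ln_div)
qed

lemma five_term_arguments_bounded:
  fixes x t :: real
  assumes "\<bar>x\<bar> < 1" "\<bar>t\<bar> < 1" "0 \<le> x \<or> 0 \<le> t"
  shows "\<bar>x * t\<bar> < 1" "\<bar>x * (1 - t) / (1 - x * t)\<bar> < 1" "\<bar>t * (1 - x) / (1 - x * t)\<bar> < 1"
proof -
  show "\<bar>x * t\<bar> < 1"
    using assms mult_strict_mono[of "\<bar>x\<bar>" 1 "\<bar>t\<bar>" 1] by (simp add: abs_mult)
  then have pos: "0 < 1 - x * t" by (simp add: abs_less_iff)
  have "x * t \<le> x \<and> x * t \<le> t \<or> x * t \<le> 0"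
  proof (cases "0 \<le> x \<and> 0 \<le> t")
    case True
    then show ?thesis
      using assms by (simp add: mult_left_le mult_left_le_one_le abs_less_iff)
  next
    case False
    then show ?thesis
      using assms(3) by (auto intro: mult_nonneg_nonpos mult_nonpos_nonneg)
  qed
  then show "\<bar>x * (1 - t) / (1 - x * t)\<bar> < 1" "\<bar>t * (1 - x) / (1 - x * t)\<bar> < 1"
    using assms pos by (auto simp: abs_less_iff field_simps)
qed

text \<open>Along \<open>t\<close>, the dilogarithm part of the five-term relation has the same derivative as its
  logarithmic part.\<close>

lemma five_term_Li2_deriv_sum:
  fixes x t :: real
  assumes "x \<noteq> 0" "t \<noteq> 0" "x < 1" "t < 1" "0 < 1 - x * t"
  defines "D \<equiv> 1 - x * t"
  shows "Li2_deriv t - Li2_deriv (x * t) * x - Li2_deriv (x * (1 - t) / D) * (- x * (1 - x) / D\<^sup>2)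
           - Li2_deriv (t * (1 - x) / D) * ((1 - x) / D\<^sup>2)
         = x / D * (ln (1 - t) - ln D) + (x / D - 1 / (1 - t)) * (ln (1 - x) - ln D)"
proof -
  define A B C where "A = ln (1 - x)" and "B = ln (1 - t)" and "C = ln D"
  have D: "0 < D" using assms(5) by (simp add: D_def)
  have "1 - x * (1 - t) / D = (1 - x) / D" "1 - t * (1 - x) / D = (1 - t) / D"
    using D by (simp_all add: D_def field_simps)
  then have ln_u: "ln (1 - x * (1 - t) / D) = A - C" and ln_v: "ln (1 - t * (1 - x) / D) = B - C"
    using D assms(1-4) by (simp_all add: A_def B_def C_def ln_div)
  have nz: "x * (1 - t) / D \<noteq> 0" "t * (1 - x) / D \<noteq> 0" "x * t \<noteq> 0"
    using D assms(1-4) by auto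
  have "Li2_deriv t = - B / t"
    using assms(2) by (simp add: Li2_deriv_eq B_def)
  moreover have "Li2_deriv (x * t) * x = - C / t"
    using nz assms(1-4) by (simp add: Li2_deriv_eq C_def D_def)
  moreover have "Li2_deriv (x * (1 - t) / D) * (- x * (1 - x) / D\<^sup>2) = (A - C) * (1 - x) / ((1 - t) * D)"
    unfolding Li2_deriv_eq[OF nz(1)] ln_u using D assms(1-4) by (simp add: power2_eq_square field_simps)
  moreover have "Li2_deriv (t * (1 - x) / D) * ((1 - x) / D\<^sup>2) = - (B - C) / (t * D)"
    unfolding Li2_deriv_eq[OF nz(2)] ln_v using D assms(1-4) by (simp add: power2_eq_square field_simps)
  ultimately have "Li2_deriv t - Li2_deriv (x * t) * x - Li2_deriv (x * (1 - t) / D) * (- x * (1 - x) / D\<^sup>2)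
      - Li2_deriv (t * (1 - x) / D) * ((1 - x) / D\<^sup>2) - (x / D * (B - C) + (x / D - 1 / (1 - t)) * (A - C))
      = (B - C) * (1 / (t * D) - 1 / t - x / D) + (A - C) * (1 / (1 - t) - x / D - (1 - x) / ((1 - t) * D))"
    by (simp only:) (simp add: algebra_simps diff_divide_distrib add_divide_distrib)
  moreover have "1 / (t * D) - 1 / t - x / D = 0" "1 / (1 - t) - x / D - (1 - x) / ((1 - t) * D) = 0"
    using D assms(1-4) by (simp_all add: D_def field_simps)
  ultimately show ?thesis by (simp add: A_def B_def C_def)
qed

lemma five_term_derivative_zero:
  fixes x t :: real
  assumes "\<bar>x\<bar> < 1" "\<bar>t\<bar> < 1" "0 \<le> x \<or> 0 \<le> t" "x \<noteq> 0"
  shows "((\<lambda>t. Li2 t - Li2 (x * t) - Li2 (x * (1 - t) / (1 - x * t)) - Li2 (t * (1 - x) / (1 - x * t))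
            - (ln (1 - x) - ln (1 - x * t)) * (ln (1 - t) - ln (1 - x * t))) has_real_derivative 0) (at t)"
proof -
  note bounds = five_term_arguments_bounded[OF assms(1-3)]
  have pos: "0 < 1 - x * t" and x: "x < 1" and t: "t < 1"
    using bounds(1) assms by (auto simp: abs_less_iff)
  have "((\<lambda>t. x * (1 - t) / (1 - x * t)) has_real_derivative - x * (1 - x) / (1 - x * t)\<^sup>2) (at t)"
    "((\<lambda>t. t * (1 - x) / (1 - x * t)) has_real_derivative (1 - x) / (1 - x * t)\<^sup>2) (at t)"
    "((\<lambda>t. ln (1 - x * t)) has_real_derivative - x / (1 - x * t)) (at t)"
    "((\<lambda>t. ln (1 - t)) has_real_derivative - 1 / (1 - t)) (at t)"
    "((\<lambda>t. x * t) has_real_derivative x) (at t)"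
    using pos t by (auto intro!: derivative_eq_intros simp: field_simps power2_eq_square)
  then have "((\<lambda>t. Li2 t - Li2 (x * t) - Li2 (x * (1 - t) / (1 - x * t)) - Li2 (t * (1 - x) / (1 - x * t))
            - (ln (1 - x) - ln (1 - x * t)) * (ln (1 - t) - ln (1 - x * t))) has_real_derivative
        Li2_deriv t - Li2_deriv (x * t) * x
        - Li2_deriv (x * (1 - t) / (1 - x * t)) * (- x * (1 - x) / (1 - x * t)\<^sup>2)
        - Li2_deriv (t * (1 - x) / (1 - x * t)) * ((1 - x) / (1 - x * t)\<^sup>2)
        - ((0 - - x / (1 - x * t)) * (ln (1 - t) - ln (1 - x * t))
           + (- 1 / (1 - t) - - x / (1 - x * t)) * (ln (1 - x) - ln (1 - x * t)))) (at t)"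
    by (intro DERIV_diff DERIV_mult DERIV_Li2_chain[where f' = 1, simplified]
        DERIV_Li2_chain DERIV_ident DERIV_const assms(2) bounds)
  moreover have "Li2_deriv t - Li2_deriv (x * t) * x
        - Li2_deriv (x * (1 - t) / (1 - x * t)) * (- x * (1 - x) / (1 - x * t)\<^sup>2)
        - Li2_deriv (t * (1 - x) / (1 - x * t)) * ((1 - x) / (1 - x * t)\<^sup>2)
        = (0 - - x / (1 - x * t)) * (ln (1 - t) - ln (1 - x * t))
           + (- 1 / (1 - t) - - x / (1 - x * t)) * (ln (1 - x) - ln (1 - x * t))"
  proof (cases "t = 0")
    case True
    then show ?thesis using x assms(4) by (simp add: Li2_deriv_def field_simps)
  next
    case False
    then show ?thesis
      using five_term_Li2_deriv_sum[of x t] assms(4) x t pos by simp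
  qed
  ultimately show ?thesis by simp
qed

lemma Li2_five_term:
  assumes "\<bar>x\<bar> < 1" "\<bar>y\<bar> < 1" "0 \<le> x \<or> 0 \<le> y"
  shows "Li2 x + Li2 y - Li2 (x * y) = Li2 (x * (1 - y) / (1 - x * y)) + Li2 (y * (1 - x) / (1 - x * y))
         + ln ((1 - x) / (1 - x * y)) * ln ((1 - y) / (1 - x * y))"
proof (cases "x = 0")
  case False
  define F where "F t = Li2 t - Li2 (x * t) - Li2 (x * (1 - t) / (1 - x * t))
     - Li2 (t * (1 - x) / (1 - x * t)) - (ln (1 - x) - ln (1 - x * t)) * (ln (1 - t) - ln (1 - x * t))"
    for t
  define S where "S = {min 0 y..max 0 y}"
  have "(F has_real_derivative 0) (at t)" if "t \<in> S" for t
    unfolding F_def using assms False that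
    by (intro five_term_derivative_zero) (auto simp: S_def)
  then have "F y = F 0"
    by (intro DERIV_zero_unique_convex[of S F y 0]) (auto simp: S_def)
  moreover have "0 < 1 - x" "0 < 1 - y" "0 < 1 - x * y"
    using five_term_arguments_bounded(1)[OF assms] assms by (auto simp: abs_less_iff)
  ultimately show ?thesis by (simp add: F_def ln_div)
qed simp

lemma sqrt5_mult_sqrt5: "sqrt 5 * (sqrt 5 * x) = 5 * (x :: real)"
  by (simp add: mult.assoc [symmetric])

lemma sqrt5_bounds: "2 < sqrt (5 :: real)" "sqrt (5 :: real) < 3"
  by (simp_all add: real_less_rsqrt real_less_lsqrt)

lemmas golden_simps = gold_alpha_def gold_beta_def power2_eq_square power3_eq_cube sqrt5_mult_sqrt5
  field_simps

lemma gold_alpha_bounds: "1 < gold_alpha" "gold_alpha < 2"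
  and gold_beta_bounds: "-1 < gold_beta" "gold_beta < 0"
  using sqrt5_bounds by (simp_all add: gold_alpha_def gold_beta_def)

lemma gold_alpha_times_beta: "gold_alpha * gold_beta = -1"
  and gold_alpha_minus_beta: "gold_alpha - gold_beta = sqrt 5"
  by (simp_all add: golden_simps)

lemma ln_gold_alpha_power: "ln (gold_alpha ^ n) = real n * ln gold_alpha"
  using gold_alpha_bounds by (simp add: ln_realpow)

lemma ln_abs_gold_beta_power: "ln (\<bar>gold_beta\<bar> ^ n) = - (real n * ln gold_alpha)"
proof -
  have "\<bar>gold_beta\<bar> = inverse gold_alpha"
    using gold_alpha_times_beta gold_alpha_bounds gold_beta_bounds by (simp add: field_simps)
  then show ?thesis
    using gold_alpha_bounds by (simp add: ln_realpow ln_inverse)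
qed

lemma Li2_reflection_ratio:
  assumes "0 < a" "0 < b"
  shows "Li2 (a / (a + b)) + Li2 (b / (a + b)) = pi\<^sup>2 / 6 - (ln a - ln (a + b)) * (ln b - ln (a + b))"
proof -
  have "0 < a / (a + b)" "a / (a + b) < 1" "1 - a / (a + b) = b / (a + b)"
    using assms by (simp_all add: field_simps)
  then show ?thesis
    using Li2_reflection[of "a / (a + b)"] assms by (simp add: ln_div)
qed

lemma Li2_gold_power_reflection:
  fixes r :: nat
  defines "M \<equiv> gold_alpha ^ r + \<bar>gold_beta\<bar> ^ r"
  shows "Li2 (gold_alpha ^ r / M) + Li2 (\<bar>gold_beta\<bar> ^ r / M)
         = pi\<^sup>2 / 6 + (real r)\<^sup>2 * (ln gold_alpha)\<^sup>2 - (ln M)\<^sup>2"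
  using Li2_reflection_ratio[of "gold_alpha ^ r" "\<bar>gold_beta\<bar> ^ r"] gold_alpha_bounds gold_beta_bounds
  unfolding M_def ln_gold_alpha_power ln_abs_gold_beta_power
  by (simp add: power2_eq_square algebra_simps)

lemma Li2_gold_Lucas:
  assumes "even r"
  shows "Li2 (gold_alpha ^ r / lucasR r) + Li2 (gold_beta ^ r / lucasR r)
         = pi\<^sup>2 / 6 + (real r)\<^sup>2 * (ln gold_alpha)\<^sup>2 - (ln (lucasR r))\<^sup>2"
  using Li2_gold_power_reflection[of r] assms by (simp add: lucasR_def power_even_abs)

lemma Li2_gold_Fibonacci:
  assumes "odd r"
  shows "Li2 (gold_alpha ^ r / (sqrt 5 * fibR r)) + Li2 (- (gold_beta ^ r) / (sqrt 5 * fibR r))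
         = pi\<^sup>2 / 6 + (real r)\<^sup>2 * (ln gold_alpha)\<^sup>2 - (ln 5)\<^sup>2 / 4 - ln 5 * ln (fibR r) - (ln (fibR r))\<^sup>2"
proof -
  have beta: "\<bar>gold_beta\<bar> ^ r = - (gold_beta ^ r)"
    using assms gold_beta_bounds by (simp add: power_abs abs_of_neg)
  have M: "sqrt 5 * fibR r = gold_alpha ^ r + \<bar>gold_beta\<bar> ^ r"
    unfolding beta by (simp add: fibR_def gold_alpha_minus_beta)
  have "0 < sqrt 5 * fibR r"
    unfolding M using gold_alpha_bounds gold_beta_bounds by (simp add: add_pos_pos)
  then have "ln (sqrt 5 * fibR r) = ln 5 / 2 + ln (fibR r)"
    by (simp add: ln_mult ln_sqrt zero_less_mult_iff)
  then show ?thesis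
    using Li2_gold_power_reflection[of r, folded M, unfolded beta]
    by (simp add: power2_eq_square algebra_simps)
qed

lemma Li2_gold_halves:
  "Li2 (gold_alpha / 2) + Li2 (gold_beta / 2) = pi\<^sup>2 / 12 + 2 * (ln gold_alpha)\<^sup>2 - (ln 2)\<^sup>2"
proof -
  define a where "a = ln gold_alpha"
  note bounds = gold_alpha_bounds gold_beta_bounds
  have ids: "1 - gold_alpha / 2 = gold_beta\<^sup>2 / 2"
    "gold_beta\<^sup>2 / 2 / (gold_beta\<^sup>2 / 2 - 1) = gold_beta ^ 3" "1 - gold_beta\<^sup>2 / 2 = gold_alpha / 2"
    "gold_beta / 2 / (gold_beta / 2 - 1) = - (gold_beta ^ 3)" "1 - gold_beta / 2 = gold_alpha\<^sup>2 / 2"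
    "(1 - - (gold_beta ^ 3)) / (1 + - (gold_beta ^ 3)) = - gold_beta"
    "(1 + - (gold_beta ^ 3)) / (1 - - (gold_beta ^ 3)) = gold_alpha"
    "1 - - gold_beta = gold_beta\<^sup>2" "gold_beta / (gold_beta - 1) = gold_beta\<^sup>2" "1 - gold_beta = gold_alpha"
    using sqrt5_bounds by (simp_all add: golden_simps)
  have logs: "ln (gold_alpha / 2) = a - ln 2" "ln (gold_alpha\<^sup>2 / 2) = 2 * a - ln 2"
    "ln (gold_beta\<^sup>2 / 2) = - 2 * a - ln 2" "ln (gold_beta\<^sup>2) = - 2 * a"
    "ln (- (gold_beta ^ 3)) = - 3 * a" "ln (- gold_beta) = - a"
    using bounds ln_abs_gold_beta_power[of 1] ln_abs_gold_beta_power[of 2] ln_abs_gold_beta_power[of 3]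
    unfolding a_def by (simp_all add: ln_div ln_gold_alpha_power abs_of_neg)
  have "0 < gold_beta\<^sup>2" "gold_beta\<^sup>2 < 1" "0 < - (gold_beta ^ 3)" "- (gold_beta ^ 3) < 1"
    using sqrt5_bounds by (simp_all add: golden_simps)
  note facts = this bounds
  txt \<open>The arguments below are mapped to one another by \<open>x \<mapsto> 1 - x\<close>, \<open>x \<mapsto> x / (x - 1)\<close>
    and \<open>x \<mapsto> (1 - x) / (1 + x)\<close>, so the six equations can be solved for the wanted sum.\<close>
  have "Li2 (gold_alpha / 2) + Li2 (gold_beta\<^sup>2 / 2) = pi\<^sup>2 / 6 - (a - ln 2) * (- 2 * a - ln 2)"
    using Li2_reflection[of "gold_alpha / 2"] facts unfolding ids logs by simp
  moreover have "Li2 (gold_beta\<^sup>2 / 2) + Li2 (gold_beta ^ 3) = - (a - ln 2)\<^sup>2 / 2"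
    using Li2_Landen[of "gold_beta\<^sup>2 / 2"] facts unfolding ids logs by auto
  moreover have "Li2 (gold_beta / 2) + Li2 (- (gold_beta ^ 3)) = - (2 * a - ln 2)\<^sup>2 / 2"
    using Li2_Landen[of "gold_beta / 2"] facts unfolding ids logs by simp
  moreover have "Li2 (- (gold_beta ^ 3)) - Li2 (gold_beta ^ 3) + Li2 (- gold_beta) - Li2 gold_beta
      = pi\<^sup>2 / 4 - 3 * a * a"
    using Li2_chi_reflection[of "- (gold_beta ^ 3)"] facts unfolding ids logs by (simp add: a_def)
  moreover have "Li2 (- gold_beta) + Li2 (gold_beta\<^sup>2) = pi\<^sup>2 / 6 - (- a) * (- 2 * a)"
    using Li2_reflection[of "- gold_beta"] facts unfolding ids logs by simp
  moreover have "Li2 gold_beta + Li2 (gold_beta\<^sup>2) = - a\<^sup>2 / 2"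
    using Li2_Landen[of gold_beta] facts unfolding ids a_def by simp
  ultimately show ?thesis unfolding a_def by algebra
qed

lemma Li2_gold_cubes_fifth:
  "Li2 (gold_alpha ^ 3 / 5) + Li2 (gold_beta ^ 3 / 5) =
     pi\<^sup>2 / 12 + 6 * (ln gold_alpha)\<^sup>2 - 2 * (ln 2)\<^sup>2 + 2 * ln 2 * ln 5 - (ln 5)\<^sup>2 - Li2 (- 1 / 4)"
proof -
  define a x y where "a = ln gold_alpha" and "x = gold_alpha / 2" and "y = gold_beta / 2"
  have xy: "x * y = - 1 / 4"
    unfolding x_def y_def using sqrt5_bounds by (simp add: golden_simps)
  have args: "x * (1 - y) / (1 - x * y) = gold_alpha ^ 3 / 5" "y * (1 - x) / (1 - x * y) = gold_beta ^ 3 / 5"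
    "(1 - x) / (1 - x * y) = 2 * gold_beta\<^sup>2 / 5" "(1 - y) / (1 - x * y) = 2 * gold_alpha\<^sup>2 / 5"
    unfolding x_def y_def using sqrt5_bounds by (simp_all add: golden_simps)
  have logs: "ln (2 * gold_beta\<^sup>2 / 5) = ln 2 - 2 * a - ln 5" "ln (2 * gold_alpha\<^sup>2 / 5) = ln 2 + 2 * a - ln 5"
    using gold_alpha_bounds gold_beta_bounds ln_abs_gold_beta_power[of 2] ln_gold_alpha_power[of 2]
    unfolding a_def by (simp_all add: ln_div ln_mult)
  have "\<bar>x\<bar> < 1" "\<bar>y\<bar> < 1" "0 \<le> x"
    using gold_alpha_bounds gold_beta_bounds by (simp_all add: x_def y_def)
  then have "Li2 x + Li2 y - Li2 (- 1 / 4)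
      = Li2 (gold_alpha ^ 3 / 5) + Li2 (gold_beta ^ 3 / 5) + (ln 2 - 2 * a - ln 5) * (ln 2 + 2 * a - ln 5)"
    using Li2_five_term[of x y] unfolding args logs unfolding xy by simp
  with Li2_gold_halves show ?thesis
    unfolding x_def y_def a_def by algebra
qed

lemma Li2_gold_squares_quarter:
  "Li2 (gold_alpha\<^sup>2 / 4) + Li2 (gold_beta\<^sup>2 / 4) =
     pi\<^sup>2 / 6 + 2 * (ln gold_alpha)\<^sup>2 - (ln 5)\<^sup>2 / 2 + 2 * ln 2 * ln 5 - 4 * (ln 2)\<^sup>2 - Li2 (1 / 5)"
proof -
  define a x y where "a = ln gold_alpha" and "x = - (gold_alpha / 2)" and "y = - (gold_beta / 2)"
  have xy: "x * y = - 1 / 4"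
    unfolding x_def y_def using sqrt5_bounds by (simp add: golden_simps)
  have args: "x * (1 - y) / (1 - x * y) = - (1 / sqrt 5)" "y * (1 - x) / (1 - x * y) = 1 / sqrt 5"
    "(1 - x) / (1 - x * y) = 2 * gold_alpha / sqrt 5" "(1 - y) / (1 - x * y) = 2 * \<bar>gold_beta\<bar> / sqrt 5"
    unfolding x_def y_def abs_of_neg[OF gold_beta_bounds(2)] using sqrt5_bounds
    by (simp_all add: golden_simps)
  have logs: "ln (2 * gold_alpha / sqrt 5) = ln 2 + a - ln 5 / 2"
    "ln (2 * \<bar>gold_beta\<bar> / sqrt 5) = ln 2 - a - ln 5 / 2"
    using gold_alpha_bounds less_imp_neq[OF gold_beta_bounds(2)] ln_abs_gold_beta_power[of 1]
    unfolding a_def by (simp_all add: ln_div ln_mult ln_sqrt)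
  have "\<bar>x\<bar> < 1" "\<bar>y\<bar> < 1" "0 \<le> y"
    using gold_alpha_bounds gold_beta_bounds by (simp_all add: x_def y_def)
  then have "Li2 x + Li2 y - Li2 (- 1 / 4)
      = Li2 (- (1 / sqrt 5)) + Li2 (1 / sqrt 5) + (ln 2 + a - ln 5 / 2) * (ln 2 - a - ln 5 / 2)"
    using Li2_five_term[of x y] unfolding args logs unfolding xy by simp
  moreover have "Li2 (gold_alpha / 2) + Li2 x = Li2 (gold_alpha\<^sup>2 / 4) / 2"
    "Li2 (gold_beta / 2) + Li2 y = Li2 (gold_beta\<^sup>2 / 4) / 2"
    "Li2 (1 / sqrt 5) + Li2 (- (1 / sqrt 5)) = Li2 (1 / 5) / 2"
    using Li2_duplication[of "gold_alpha / 2"] Li2_duplication[of "gold_beta / 2"]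
      Li2_duplication[of "1 / sqrt 5"] gold_alpha_bounds gold_beta_bounds sqrt5_bounds
    by (simp_all add: x_def y_def power_divide)
  moreover have "Li2 (- 1 / 4) + Li2 (1 / 5) = - (ln 5 - 2 * ln 2)\<^sup>2 / 2"
  proof -
    have "ln (5 / 4 :: real) = ln 5 - 2 * ln 2"
      using ln_realpow[of 2 2] by (simp add: ln_div)
    then show ?thesis using Li2_Landen[of "- 1 / 4"] by simp
  qed
  ultimately show ?thesis
    using Li2_gold_halves unfolding a_def by algebra
qed

lemma Li2_gold_thirds:
  "Li2 (gold_alpha / 3) + Li2 (gold_beta / 3) =
     (ln gold_alpha)\<^sup>2 - (ln 5)\<^sup>2 / 4 + ln 3 * ln 5 - (ln 3)\<^sup>2 + 3 / 2 * Li2 (1 / 5) - Li2 (1 / 25) / 2"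
proof -
  define a x y where "a = ln gold_alpha" and "x = 1 / sqrt 5" and "y = - (1 / sqrt 5)"
  have xy: "x * y = - (1 / 5)"
    unfolding x_def y_def by simp
  have args: "x * (1 - y) / (1 - x * y) = gold_alpha / 3" "y * (1 - x) / (1 - x * y) = gold_beta / 3"
    "(1 - x) / (1 - x * y) = sqrt 5 * \<bar>gold_beta\<bar> / 3" "(1 - y) / (1 - x * y) = sqrt 5 * gold_alpha / 3"
    unfolding x_def y_def abs_of_neg[OF gold_beta_bounds(2)] using sqrt5_bounds
    by (simp_all add: golden_simps)
  have logs: "ln (sqrt 5 * \<bar>gold_beta\<bar> / 3) = ln 5 / 2 - a - ln 3"
    "ln (sqrt 5 * gold_alpha / 3) = ln 5 / 2 + a - ln 3"
    using gold_alpha_bounds less_imp_neq[OF gold_beta_bounds(2)] ln_abs_gold_beta_power[of 1]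
    unfolding a_def by (simp_all add: ln_div ln_mult ln_sqrt)
  have "\<bar>x\<bar> < 1" "\<bar>y\<bar> < 1" "0 \<le> x"
    using sqrt5_bounds by (simp_all add: x_def y_def)
  then have "Li2 x + Li2 y - Li2 (- (1 / 5))
      = Li2 (gold_alpha / 3) + Li2 (gold_beta / 3) + (ln 5 / 2 - a - ln 3) * (ln 5 / 2 + a - ln 3)"
    using Li2_five_term[of x y] unfolding args logs unfolding xy by simp
  moreover have "Li2 x + Li2 y = Li2 (1 / 5) / 2" "Li2 (1 / 5) + Li2 (- (1 / 5)) = Li2 (1 / 25) / 2"
    using Li2_duplication[of x] Li2_duplication[of "1 / 5"] sqrt5_bounds
    by (simp_all add: x_def y_def power_divide)
  ultimately show ?thesis
    unfolding a_def by (simp add: field_simps power2_eq_square)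
qed

theorem theorem14:
  defines "\<alpha> \<equiv> gold_alpha" and "\<beta> \<equiv> gold_beta"
  shows
   "(Li2 (\<alpha> / 2) + Li2 (\<beta> / 2) = pi\<^sup>2 / 12 + 2 * (ln \<alpha>)\<^sup>2 - (ln 2)\<^sup>2) \<and>
   (Li2 (\<alpha> ^ 3 / 5) + Li2 (\<beta> ^ 3 / 5) =
      pi\<^sup>2 / 12 + 6 * (ln \<alpha>)\<^sup>2 - 2 * (ln 2)\<^sup>2 + 2 * ln 2 * ln 5 - (ln 5)\<^sup>2 - Li2 (- 1 / 4)) \<and>
   (\<forall>r::nat. even r \<longrightarrow>
      Li2 (\<alpha> ^ r / lucasR r) + Li2 (\<beta> ^ r / lucasR r) =
        pi\<^sup>2 / 6 + (real r)\<^sup>2 * (ln \<alpha>)\<^sup>2 - (ln (lucasR r))\<^sup>2) \<and>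
   (Li2 (\<alpha> ^ 2 / 3) + Li2 (\<beta> ^ 2 / 3) = pi\<^sup>2 / 6 + 4 * (ln \<alpha>)\<^sup>2 - (ln 3)\<^sup>2) \<and>
   (\<forall>r::nat. odd r \<longrightarrow>
      Li2 (\<alpha> ^ r / (sqrt 5 * fibR r)) + Li2 (- (\<beta> ^ r) / (sqrt 5 * fibR r)) =
        pi\<^sup>2 / 6 + (real r)\<^sup>2 * (ln \<alpha>)\<^sup>2 - (ln 5)\<^sup>2 / 4 - ln 5 * ln (fibR r) - (ln (fibR r))\<^sup>2) \<and>
   (Li2 (\<alpha> / sqrt 5) + Li2 (- \<beta> / sqrt 5) = pi\<^sup>2 / 6 + (ln \<alpha>)\<^sup>2 - (ln 5)\<^sup>2 / 4) \<and>
   (Li2 (\<alpha>\<^sup>2 / 4) + Li2 (\<beta>\<^sup>2 / 4) =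
      pi\<^sup>2 / 6 + 2 * (ln \<alpha>)\<^sup>2 - (ln 5)\<^sup>2 / 2 + 2 * ln 2 * ln 5 - 4 * (ln 2)\<^sup>2 - Li2 (1 / 5)) \<and>
   (Li2 (\<alpha> / 3) + Li2 (\<beta> / 3) =
      (ln \<alpha>)\<^sup>2 - (ln 5)\<^sup>2 / 4 + ln 3 * ln 5 - (ln 3)\<^sup>2 + 3 / 2 * Li2 (1 / 5) - Li2 (1 / 25) / 2)"
proof -
  have "lucasR 2 = 3"
    using sqrt5_bounds by (simp add: lucasR_def golden_simps)
  moreover have "fibR 1 = 1"
    using gold_alpha_minus_beta by (simp add: fibR_def)
  ultimately show ?thesis
    unfolding assms
    using Li2_gold_halves Li2_gold_cubes_fifth Li2_gold_Lucas Li2_gold_Lucas[of 2]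
      Li2_gold_Fibonacci Li2_gold_Fibonacci[of 1] Li2_gold_squares_quarter Li2_gold_thirds
    by simp
qed

end
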